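(* Let $\mathcal{D}_1=\{(z_1,z_2)\in\mathbb{C}^2: 1+|z_1|^2-|z_2|^2>|1+z_1^2-z_2^2|,\ \mathrm{Im}(z_1(1+\overline{z_2}))>0\}$ and $\mathcal{H}=\{(z_1,z_2)\in\mathbb{C}^2:\mathrm{Im}(z_1)>0,\ z_2\notin(-\infty,-1]\cup[1,\infty)\}$. Then $\mathcal{D}_1\subset\mathcal{H}$, and if $(z_1,z_2)\in\mathcal{D}_1$ then $(z_1,0)\in\mathcal{D}_1$. *)

theory Defs
  imports Complex_Main
begin

definition D1 :: "(complex \<times> complex) set" where
  "D1 = {(z1, z2). 1 + (cmod z1)^2 - (cmod z2)^2 > cmod (1 + z1^2 - z2^2)
                 \<and> Im (z1 * (1 + cnj z2)) > 0}"

definition H :: "(complex \<times> complex) set" where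
  "H = {(z1, z2). Im z1 > 0 \<and>
          z2 \<notin> complex_of_real ` ({..-1} \<union> {1..})}"

end

theory Submission
  imports Defs
begin

(* Put e = Im (cnj z1 * z2). Squaring the first defining inequality of D1 turns it into
   (Im z1)^2 > (Im z2)^2 + e^2, and the second one reads Im z1 > e. Together they force
   Im z1 > 0, since otherwise e < Im z1 <= 0 would give e^2 > (Im z1)^2. For real z2 = t
   we have e = -t Im z1, so the first condition becomes t^2 (Im z1)^2 < (Im z1)^2, i.e.
   |t| < 1. For z2 = 0 both conditions reduce to Im z1 > 0. *)

lemma sq_diff_cmod_one_add_sq_diff_sq:
  fixes z w :: complex
  shows "(1 + (cmod z)^2 - (cmod w)^2)^2 - (cmod (1 + z^2 - w^2))^2
           = 4 * ((Im z)^2 - (Im w)^2 - (Im (cnj z * w))^2)"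
  unfolding cmod_power2 by (simp add: power2_eq_square algebra_simps)

lemma cmod_less_iff_sq_less: "cmod w < s \<longleftrightarrow> 0 < s \<and> (cmod w)^2 < s^2"
proof
  assume "cmod w < s"
  then show "0 < s \<and> (cmod w)^2 < s^2"
    by (auto intro: power_strict_mono order_le_less_trans [OF norm_ge_zero])
next
  assume "0 < s \<and> (cmod w)^2 < s^2"
  then show "cmod w < s"
    by (auto intro: power2_less_imp_less)
qed

lemma mem_D1_iff:
  "(z1, z2) \<in> D1 \<longleftrightarrow>
     0 < 1 + (cmod z1)^2 - (cmod z2)^2 \<and>
     (Im z2)^2 + (Im (cnj z1 * z2))^2 < (Im z1)^2 \<and>
     Im (cnj z1 * z2) < Im z1"
  using sq_diff_cmod_one_add_sq_diff_sq [of z1 z2]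
  by (auto simp: D1_def cmod_less_iff_sq_less ring_distribs)

lemma pos_if_greater_and_sq_greater:
  fixes b e :: real
  assumes "e < b" and "e^2 < b^2"
  shows "0 < b"
proof (rule ccontr)
  assume "\<not> 0 < b"
  with assms(1) have "(-b)^2 < (-e)^2"
    by (intro power_strict_mono) auto
  with assms(2) show False
    by simp
qed

lemma Im_pos_if_mem_D1:
  assumes "(z1, z2) \<in> D1"
  shows "0 < Im z1"
proof (rule pos_if_greater_and_sq_greater)
  show "Im (cnj z1 * z2) < Im z1"
    using assms unfolding mem_D1_iff by blast
  show "(Im (cnj z1 * z2))^2 < (Im z1)^2"
    using assms zero_le_power2 [of "Im z2"] unfolding mem_D1_iff by linarith
qed

lemma abs_less_one_if_mem_D1_of_real:
  assumes "(z1, complex_of_real t) \<in> D1"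
  shows "\<bar>t\<bar> < 1"
proof -
  have "(Im z1)^2 * t^2 < (Im z1)^2 * 1"
    using assms by (simp add: mem_D1_iff power_mult_distrib algebra_simps)
  then have "t^2 < 1"
    by (metis mult_left_mono not_le zero_le_power2)
  then show ?thesis
    by (simp add: abs_square_less_1)
qed

lemma mem_D1_zero_iff: "(z1, 0) \<in> D1 \<longleftrightarrow> 0 < Im z1"
  by (auto simp: mem_D1_iff add_pos_nonneg)

theorem lemma3p1:
  shows "D1 \<subseteq> H \<and> (\<forall>z1 z2. (z1, z2) \<in> D1 \<longrightarrow> (z1, 0) \<in> D1)"
proof
  show "D1 \<subseteq> H"
  proof clarify
    fix z1 z2
    assume D1: "(z1, z2) \<in> D1"
    have "z2 \<notin> complex_of_real ` ({..-1} \<union> {1..})"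
      using abs_less_one_if_mem_D1_of_real D1 by fastforce
    with Im_pos_if_mem_D1 [OF D1] show "(z1, z2) \<in> H"
      by (simp add: H_def)
  qed
  show "\<forall>z1 z2. (z1, z2) \<in> D1 \<longrightarrow> (z1, 0) \<in> D1"
    using Im_pos_if_mem_D1 mem_D1_zero_iff by blast
qed

end
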